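(* Let $T=T_{\lambda\Delta}$ be a non-degenerate T-graph. Embed $\mathcal H$ in the plane as follows: each white vertex $w$ is placed at the centre of mass of the triangle $\psi(w)$; each black vertex $b$ is placed at the unique vertex of $T$ lying in the interior of the segment $\psi(b)$; a white vertex $w$ and a black vertex $b$ are joined by a straight edge if and only if the segment $\psi(b)$ shares more than one point with the triangle $\psi(w)$. Then this is a proper embedding of $\mathcal H$ (the edges so drawn are exactly the edges of $\mathcal H$ and no two of them cross).
   Context: Setup. $\mathcal H$ is the hexagonal lattice with black/white bipartition, $\mathcal H^\dagger$ its dual triangular lattice, whose faces are coloured black or white according to the vertex of $\mathcal H$ they contain. A T-graph $T=T_{\lambda\Delta}=\psi(\mathcal H^\dagger)\subset\mathbb C$ is the image of $\mathcal H^\dagger$ under a map $\psi=\psi_{\lambda\Delta}$ defined on vertices of $\mathcal H^\dagger$ as the primitive of an explicit gradient flow (depending on a triangle $\Delta$ with angles $\pi p_a,\pi p_b,\pi p_c$, $p_a+p_b+p_c=1$, $p_\bullet\in(0,1)$, and a unit complex number $\lambda$) and extended affinely on edges. The following properties hold: the image of each black face of $\mathcal H^\dagger$ is a segment; the image of each white face is a triangle similar to $\Delta$ with orientation preserved; these triangles cover the plane with disjoint interiors; if two segments intersect, the intersection point is an endpoint of at least one of them. $T$ is called non-degenerate if no white triangle is degenerate to a point and every point $\psi(v)$, $v$ a vertex of $\mathcal H^\dagger$, belongs to exactly three segments, being an endpoint of two of them and in the interior of the third (this holds for Lebesgue-a.e. $\lambda$). The points $\psi(v)$ are the vertices of $T$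 (all segment endpoints are of this form), edges of $T$ are the portions of segments between consecutive vertices, faces of $T$ are the white triangles. One writes $\psi(b)$ for the segment image of the black face containing the black vertex $b$ of $\mathcal H$, and $\psi(w)$ for the triangle image of the white face containing white $w$. Each segment $\psi(b)$ contains exactly one vertex of $T$ in its interior. *)

theory Defs
  imports "HOL-Analysis.Analysis"
begin

text \<open>Vertices of the triangular lattice (dual of the hexagonal lattice)
  are indexed by int \<times> int.  The white vertex w = (i,j) of the hexagonal lattice
  corresponds to the up-triangle with vertices (i,j), (i+1,j), (i,j+1); the black
  vertex b = (i,j) corresponds to the down-triangle with vertices (i+1,j), (i,j+1),
  (i+1,j+1).  Two faces are adjacent iff they share an edge of the triangular lattice.\<close>

type_synonym tvert = "int \<times> int"

definition white_face :: "int \<times> int \<Rightarrow> tvert set" where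
  "white_face w = {(fst w, snd w), (fst w + 1, snd w), (fst w, snd w + 1)}"

definition black_face :: "int \<times> int \<Rightarrow> tvert set" where
  "black_face b = {(fst b + 1, snd b), (fst b, snd b + 1), (fst b + 1, snd b + 1)}"

definition hex_adj :: "int \<times> int \<Rightarrow> int \<times> int \<Rightarrow> bool" where
  "hex_adj w b \<longleftrightarrow> b = w \<or> b = (fst w - 1, snd w) \<or> b = (fst w, snd w - 1)"

text \<open>Images of faces under psi (extended affinely): convex hulls of the images of the corners.\<close>
definition psi_tri :: "(tvert \<Rightarrow> complex) \<Rightarrow> int \<times> int \<Rightarrow> complex set" where
  "psi_tri \<psi> w = convex hull (\<psi> ` white_face w)"

definition psi_seg :: "(tvert \<Rightarrow> complex) \<Rightarrow> int \<times> int \<Rightarrow> complex set" where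
  "psi_seg \<psi> b = convex hull (\<psi> ` black_face b)"

text \<open>The reference triangle Delta with angles pi*pa, pi*pb, pi*pc at the vertices
  0, 1, and the third (positively oriented) vertex.\<close>
definition delta_apex :: "real \<Rightarrow> real \<Rightarrow> real \<Rightarrow> complex" where
  "delta_apex pa pb pc = complex_of_real (sin (pi * pb) / sin (pi * pc)) * cis (pi * pa)"

definition is_T_graph_map :: "real \<Rightarrow> real \<Rightarrow> real \<Rightarrow> (tvert \<Rightarrow> complex) \<Rightarrow> bool" where
  "is_T_graph_map pa pb pc \<psi> \<longleftrightarrow>
     \<comment> \<open>image of each black face is a segment\<close>
     (\<forall>b. collinear (\<psi> ` black_face b)) \<and>
     \<comment> \<open>image of each white face is a triangle similar to Delta, orientation preserved\<close>
     (\<forall>w. \<exists>a c. \<psi> (fst w, snd w) = c \<and> \<psi> (fst w + 1, snd w) = a + c \<and>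
                 \<psi> (fst w, snd w + 1) = a * delta_apex pa pb pc + c) \<and>
     \<comment> \<open>the triangles cover the plane with disjoint interiors\<close>
     (\<Union>w. psi_tri \<psi> w) = UNIV \<and>
     (\<forall>w w'. w \<noteq> w' \<longrightarrow> interior (psi_tri \<psi> w) \<inter> interior (psi_tri \<psi> w') = {}) \<and>
     \<comment> \<open>intersection points of two segments are endpoints of at least one of them\<close>
     (\<forall>b b' p. b \<noteq> b' \<longrightarrow> p \<in> psi_seg \<psi> b \<inter> psi_seg \<psi> b' \<longrightarrow>
          p extreme_point_of psi_seg \<psi> b \<or> p extreme_point_of psi_seg \<psi> b')"

definition T_nondegenerate :: "(tvert \<Rightarrow> complex) \<Rightarrow> bool" where
  "T_nondegenerate \<psi> \<longleftrightarrow>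
     (\<forall>w. \<not> (\<exists>z. psi_tri \<psi> w = {z})) \<and>
     (\<forall>v. card {b. \<psi> v \<in> psi_seg \<psi> b} = 3 \<and>
          card {b. \<psi> v extreme_point_of psi_seg \<psi> b} = 2 \<and>
          card {b. \<psi> v \<in> rel_interior (psi_seg \<psi> b)} = 1)"

definition white_pos :: "(tvert \<Rightarrow> complex) \<Rightarrow> int \<times> int \<Rightarrow> complex" where
  "white_pos \<psi> w = (\<psi> (fst w, snd w) + \<psi> (fst w + 1, snd w) + \<psi> (fst w, snd w + 1)) / 3"

definition black_pos :: "(tvert \<Rightarrow> complex) \<Rightarrow> int \<times> int \<Rightarrow> complex" where
  "black_pos \<psi> b = (THE x. x \<in> range \<psi> \<and> x \<in> rel_interior (psi_seg \<psi> b))"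

definition hex_pos :: "(tvert \<Rightarrow> complex) \<Rightarrow> (int \<times> int) + (int \<times> int) \<Rightarrow> complex" where
  "hex_pos \<psi> u = (case u of Inl w \<Rightarrow> white_pos \<psi> w | Inr b \<Rightarrow> black_pos \<psi> b)"

definition drawn_edge :: "(tvert \<Rightarrow> complex) \<Rightarrow> int \<times> int \<Rightarrow> int \<times> int \<Rightarrow> bool" where
  "drawn_edge \<psi> w b \<longleftrightarrow>
     (\<exists>x y. x \<noteq> y \<and> x \<in> psi_seg \<psi> b \<inter> psi_tri \<psi> w \<and> y \<in> psi_seg \<psi> b \<inter> psi_tri \<psi> w)"

end

theory Submission imports Defs begin

text \<open>Each white vertex is drawn strictly inside its triangle \<open>\<psi>(w)\<close>, while each black vertex is
  drawn at a vertex of \<open>T\<close>; vertices of \<open>T\<close> lie in no open triangle, but the black vertex \<open>b\<close>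
  lies on the three triangles adjacent to \<open>b\<close>, each of which contains two corners of the
  segment \<open>\<psi>(b)\<close>. Hence every edge \<open>wb\<close> runs inside \<open>\<psi>(w)\<close> and meets its frontier only at
  \<open>b\<close>. As the open triangles are disjoint, edges at different white vertices can only meet at
  black endpoints, and edges at a common white vertex only at the centroid. Black positions are
  distinct because a vertex of \<open>T\<close> lies inside exactly one segment. Finally, a segment not
  adjacent to \<open>w\<close> meets \<open>\<psi>(w)\<close> only on its frontier, i.e. on the adjacent segments, and
  crossing segments meet only at extreme points, of which there are finitely many.\<close>

lemma closed_segment_exits_interior_at_end:
  fixes S :: "'a::euclidean_space set"
  assumes "convex S" "c \<in> interior S" "m \<in> S" "x \<in> closed_segment c m" "x \<notin> interior S"
  shows "x = m"
proof -
  have "open_segment c m \<subseteq> interior S"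
    using in_interior_closure_convex_segment[OF assms(1,2)] assms(3) closure_subset by blast
  then show ?thesis using assms(2,4,5) by (auto simp: open_segment_def)
qed

lemma closed_segments_common_point_nested:
  fixes c :: "'a::real_vector"
  assumes "p \<in> closed_segment c a" "p \<in> closed_segment c b" "p \<noteq> c"
  shows "b \<in> closed_segment c a \<or> a \<in> closed_segment c b"
proof -
  have shorter: "y \<in> closed_segment c x"
    if "u *\<^sub>R (x - c) = v *\<^sub>R (y - c)" "0 < u" "u \<le> v" for x y u v
  proof -
    have "y - c = (1 / v) *\<^sub>R (v *\<^sub>R (y - c))" using that by simp
    also have "\<dots> = (1 / v) *\<^sub>R (u *\<^sub>R (x - c))" using that(1) by simp
    also have "\<dots> = (u / v) *\<^sub>R (x - c)" by simp
    finally have "y = (1 - u / v) *\<^sub>R c + (u / v) *\<^sub>R x"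
      by (simp add: algebra_simps)
    moreover have "0 \<le> u / v" "u / v \<le> 1" using that by auto
    ultimately show ?thesis unfolding in_segment by blast
  qed
  obtain s where s: "0 \<le> s" "p = (1 - s) *\<^sub>R c + s *\<^sub>R a"
    using assms(1) unfolding in_segment by blast
  obtain t where t: "0 \<le> t" "p = (1 - t) *\<^sub>R c + t *\<^sub>R b"
    using assms(2) unfolding in_segment by blast
  have "0 < s" "0 < t" using s t assms(3) by (auto simp: order_le_less)
  moreover have "s *\<^sub>R (a - c) = t *\<^sub>R (b - c)"
    using s(2) t(2) by (simp add: algebra_simps)
  ultimately show ?thesis using shorter[of s a t b] shorter[of t b s a] by fastforce
qed

lemma closed_segments_from_interior_point_Int:
  fixes S :: "'a::euclidean_space set"
  assumes "convex S" "c \<in> interior S" "a \<in> S" "b \<in> S" "a \<notin> interior S" "b \<notin> interior S" "a \<noteq> b"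
    and "p \<in> closed_segment c a" "p \<in> closed_segment c b"
  shows "p = c"
  using closed_segments_common_point_nested[OF assms(8,9)]
    closed_segment_exits_interior_at_end[OF assms(1,2,3) _ assms(6)]
    closed_segment_exits_interior_at_end[OF assms(1,2,4) _ assms(5)] assms(7) by blast

lemma convex_hull_3_minus_interior:
  fixes a :: "'a::euclidean_space"
  assumes "\<not> collinear {a, b, c}" "DIM('a) = 2"
    and "p \<in> convex hull {a, b, c}" "p \<notin> interior (convex hull {a, b, c})"
  shows "p \<in> closed_segment a b \<union> closed_segment a c \<union> closed_segment b c"
proof -
  obtain u v t where uvt: "0 \<le> u" "0 \<le> v" "0 \<le> t" "u + v + t = 1"
     "p = u *\<^sub>R a + v *\<^sub>R b + t *\<^sub>R c"
    using assms(3) unfolding convex_hull_3 by blast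
  have "u = 0 \<or> v = 0 \<or> t = 0"
    using assms(4) uvt unfolding interior_convex_hull_3_minimal[OF assms(1,2)]
    by (fastforce simp: order_le_less)
  then show ?thesis
  proof (elim disjE)
    assume "u = 0"
    then have "p = (1 - t) *\<^sub>R b + t *\<^sub>R c" "t \<le> 1" using uvt by auto
    then show ?thesis using uvt unfolding closed_segment_def by blast
  next
    assume "v = 0"
    then have "p = (1 - t) *\<^sub>R a + t *\<^sub>R c" "t \<le> 1" using uvt by auto
    then show ?thesis using uvt unfolding closed_segment_def by blast
  next
    assume "t = 0"
    then have "p = (1 - v) *\<^sub>R a + v *\<^sub>R b" "v \<le> 1" using uvt by auto
    then show ?thesis using uvt unfolding closed_segment_def by blast
  qed
qed

lemma convex_hull_3_eq_closed_segment:
  assumes "y \<in> closed_segment x z"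
  shows "convex hull {x, y, z} = closed_segment x z"
proof -
  have "convex hull (insert y {x, z}) = convex hull {x, z}"
    using assms by (intro hull_redundant) (simp add: segment_convex_hull)
  then show ?thesis by (simp add: segment_convex_hull insert_commute)
qed

lemma collinear_3_distinct_cases:
  fixes a :: "'a::euclidean_space"
  assumes "collinear {a, b, c}" "a \<noteq> b" "b \<noteq> c" "a \<noteq> c"
  shows "a \<in> open_segment b c \<or> b \<in> open_segment c a \<or> c \<in> open_segment a b"
  using assms collinear_between_cases[of a b c] by (auto simp: between_mem_segment open_segment_def)

lemma Im_delta_apex_pos:
  assumes "0 < pa" "pa < 1" "0 < pb" "pb < 1" "0 < pc" "pc < 1"
  shows "Im (delta_apex pa pb pc) > 0"
  using assms by (simp add: delta_apex_def sin_gt_zero)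

lemma psi_tri_Pair: "psi_tri \<psi> (i, j) = convex hull {\<psi> (i, j), \<psi> (i + 1, j), \<psi> (i, j + 1)}"
  by (simp add: psi_tri_def white_face_def)

lemma psi_seg_Pair: "psi_seg \<psi> (i, j) = convex hull {\<psi> (i + 1, j), \<psi> (i, j + 1), \<psi> (i + 1, j + 1)}"
  by (simp add: psi_seg_def black_face_def)

lemma hex_adj_black_Pair: "hex_adj w (i, j) \<longleftrightarrow> w = (i, j) \<or> w = (i, j + 1) \<or> w = (i + 1, j)"
  by (cases w) (auto simp: hex_adj_def)

lemma finite_hex_adj: "finite {b. hex_adj w b}"
  by (rule finite_subset[of _ "{w, (fst w - 1, snd w), (fst w, snd w - 1)}"]) (auto simp: hex_adj_def)

text \<open>The apex \<open>\<delta>\<close> of the reference triangle \<open>\<Delta>\<close> matters only through \<open>Im \<delta> \<noteq> 0\<close>, which makes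
  the white triangles nondegenerate.\<close>
locale T_graph =
  fixes \<delta> :: complex and \<psi> :: "int \<times> int \<Rightarrow> complex"
  assumes apex_not_real: "Im \<delta> \<noteq> 0"
    and black_collinear: "collinear (\<psi> ` black_face b)"
    and white_similar: "\<exists>a c. \<psi> (i, j) = c \<and> \<psi> (i + 1, j) = a + c \<and> \<psi> (i, j + 1) = a * \<delta> + c"
    and white_interiors_disjoint: "w \<noteq> w' \<Longrightarrow> interior (psi_tri \<psi> w) \<inter> interior (psi_tri \<psi> w') = {}"
    and black_Int_extreme_point: "b \<noteq> b' \<Longrightarrow> p \<in> psi_seg \<psi> b \<inter> psi_seg \<psi> b' \<Longrightarrow>
      p extreme_point_of psi_seg \<psi> b \<or> p extreme_point_of psi_seg \<psi> b'"
    and white_not_singleton: "psi_tri \<psi> w \<noteq> {z}"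
    and card_rel_interior_black: "card {b. \<psi> v \<in> rel_interior (psi_seg \<psi> b)} = 1"
    and black_pos_unique: "\<exists>!x. x \<in> range \<psi> \<and> x \<in> rel_interior (psi_seg \<psi> b)"
begin

lemma white_not_collinear: "\<not> collinear {\<psi> (i, j), \<psi> (i + 1, j), \<psi> (i, j + 1)}"
proof
  assume col: "collinear {\<psi> (i, j), \<psi> (i + 1, j), \<psi> (i, j + 1)}"
  obtain a c where ac: "\<psi> (i, j) = c" "\<psi> (i + 1, j) = a + c" "\<psi> (i, j + 1) = a * \<delta> + c"
    using white_similar by blast
  have "a \<noteq> 0"
    using white_not_singleton[of "(i, j)" c] ac by (auto simp: psi_tri_Pair)
  have "collinear {0, a, a * \<delta>}"
    using col collinear_3[of "a + c" c "a * \<delta> + c"] ac by (simp add: insert_commute)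
  then obtain r where "a * \<delta> = r *\<^sub>R a"
    using \<open>a \<noteq> 0\<close> unfolding collinear_lemma by auto
  then have "\<delta> = of_real r"
    using \<open>a \<noteq> 0\<close> by (simp add: scaleR_conv_of_real mult.commute)
  then show False using apex_not_real by simp
qed

lemma white_corners_distinct:
  "\<psi> (i, j) \<noteq> \<psi> (i + 1, j)" "\<psi> (i, j) \<noteq> \<psi> (i, j + 1)" "\<psi> (i + 1, j) \<noteq> \<psi> (i, j + 1)"
  using white_not_collinear[of i j] by (auto simp: insert_commute)

lemma interior_white:
  "interior (psi_tri \<psi> (i, j)) = {v. \<exists>x y z. 0 < x \<and> 0 < y \<and> 0 < z \<and> x + y + z = 1 \<and>
     x *\<^sub>R \<psi> (i, j) + y *\<^sub>R \<psi> (i + 1, j) + z *\<^sub>R \<psi> (i, j + 1) = v}"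
  unfolding psi_tri_Pair by (rule interior_convex_hull_3_minimal[OF white_not_collinear]) simp

lemma white_pos_in_interior: "white_pos \<psi> w \<in> interior (psi_tri \<psi> w)"
proof (cases w)
  case (Pair i j)
  have "(1/3) *\<^sub>R \<psi> (i, j) + (1/3) *\<^sub>R \<psi> (i + 1, j) + (1/3) *\<^sub>R \<psi> (i, j + 1) = white_pos \<psi> w"
    by (simp add: Pair white_pos_def scaleR_conv_of_real add_divide_distrib)
  then show ?thesis unfolding Pair interior_white by (intro CollectI exI[of _ "1/3"]) auto
qed

lemma convex_white: "convex (psi_tri \<psi> w)"
  unfolding psi_tri_def by (rule convex_convex_hull)

lemma convex_black: "convex (psi_seg \<psi> b)"
  unfolding psi_seg_def by (rule convex_convex_hull)

lemma closure_interior_white: "closure (interior (psi_tri \<psi> w)) = psi_tri \<psi> w"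
proof -
  have "compact (psi_tri \<psi> w)"
    unfolding psi_tri_def by (rule finite_imp_compact_convex_hull) (simp add: white_face_def)
  then show ?thesis
    using convex_closure_interior[OF convex_white] white_pos_in_interior
    by (metis closure_closed compact_imp_closed empty_iff)
qed

lemma white_eq_if_interior_Int:
  assumes "p \<in> interior (psi_tri \<psi> w)" "p \<in> psi_tri \<psi> w'"
  shows "w = w'"
proof (rule ccontr)
  assume "w \<noteq> w'"
  have "interior (psi_tri \<psi> w) \<inter> closure (interior (psi_tri \<psi> w')) \<noteq> {}"
    using assms by (auto simp: closure_interior_white)
  then have "interior (psi_tri \<psi> w) \<inter> interior (psi_tri \<psi> w') \<noteq> {}"
    using open_Int_closure_eq_empty[of "interior (psi_tri \<psi> w)"] by auto
  then show False using white_interiors_disjoint \<open>w \<noteq> w'\<close> by blast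
qed

lemma vertex_notin_interior_white: "\<psi> v \<notin> interior (psi_tri \<psi> w)"
proof
  assume v: "\<psi> v \<in> interior (psi_tri \<psi> w)"
  obtain i j where ij: "v = (i, j)" by fastforce
  have "\<psi> v \<in> psi_tri \<psi> v" unfolding ij psi_tri_Pair by (rule hull_inc) simp
  then have "w = v" using white_eq_if_interior_Int v by blast
  then show False
    using v not_in_interior_convex_hull_3(1)[of "\<psi> v"] by (simp add: ij psi_tri_Pair)
qed

lemma white_frontier_subset_black:
  assumes "p \<in> psi_tri \<psi> w" "p \<notin> interior (psi_tri \<psi> w)"
  obtains b where "hex_adj w b" "p \<in> psi_seg \<psi> b"
proof -
  obtain i j where w: "w = (i, j)" by fastforce
  have sides: "closed_segment (\<psi> (i, j)) (\<psi> (i + 1, j)) \<subseteq> psi_seg \<psi> (i, j - 1)"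
    "closed_segment (\<psi> (i, j)) (\<psi> (i, j + 1)) \<subseteq> psi_seg \<psi> (i - 1, j)"
    "closed_segment (\<psi> (i + 1, j)) (\<psi> (i, j + 1)) \<subseteq> psi_seg \<psi> (i, j)"
    by (intro closed_segment_subset convex_black; simp add: psi_seg_Pair hull_inc)+
  have "hex_adj w (i, j - 1)" "hex_adj w (i - 1, j)" "hex_adj w (i, j)"
    by (auto simp: w hex_adj_def)
  then show ?thesis
    using convex_hull_3_minus_interior[OF white_not_collinear _ assms[unfolded w psi_tri_Pair]]
      sides that by auto
qed

lemma black_corners_distinct:
  "\<psi> (i + 1, j) \<noteq> \<psi> (i, j + 1)" "\<psi> (i, j + 1) \<noteq> \<psi> (i + 1, j + 1)" "\<psi> (i + 1, j) \<noteq> \<psi> (i + 1, j + 1)"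
  using white_corners_distinct(3)[of i j] white_corners_distinct(1)[of i "j + 1"]
    white_corners_distinct(2)[of "i + 1" j]
  by (simp_all add: add.commute)

lemma black_corners_in_white:
  "\<psi> (i + 1, j) \<in> psi_tri \<psi> (i, j)" "\<psi> (i, j + 1) \<in> psi_tri \<psi> (i, j)"
  "\<psi> (i, j + 1) \<in> psi_tri \<psi> (i, j + 1)" "\<psi> (i + 1, j + 1) \<in> psi_tri \<psi> (i, j + 1)"
  "\<psi> (i + 1, j) \<in> psi_tri \<psi> (i + 1, j)" "\<psi> (i + 1, j + 1) \<in> psi_tri \<psi> (i + 1, j)"
  by (simp_all add: psi_tri_Pair hull_inc add.commute)

lemma black_segment:
  obtains x z where "{x, black_pos \<psi> (i, j), z} = {\<psi> (i + 1, j), \<psi> (i, j + 1), \<psi> (i + 1, j + 1)}"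
    "black_pos \<psi> (i, j) \<in> open_segment x z" "psi_seg \<psi> (i, j) = closed_segment x z"
proof -
  let ?A = "\<psi> (i + 1, j)" and ?B = "\<psi> (i, j + 1)" and ?C = "\<psi> (i + 1, j + 1)"
  have "collinear {?A, ?B, ?C}"
    using black_collinear[of "(i, j)"] by (simp add: black_face_def)
  then have "?A \<in> open_segment ?B ?C \<or> ?B \<in> open_segment ?C ?A \<or> ?C \<in> open_segment ?A ?B"
    using collinear_3_distinct_cases black_corners_distinct by blast
  then obtain x y z where xyz: "{x, y, z} = {?A, ?B, ?C}" "y \<in> open_segment x z" "y \<in> range \<psi>"
    by (elim disjE) (blast intro: insert_commute)+
  have seg: "psi_seg \<psi> (i, j) = closed_segment x z"
    using xyz(1,2) convex_hull_3_eq_closed_segment[of y x z]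
    by (simp add: psi_seg_Pair open_closed_segment)
  have "y \<in> rel_interior (psi_seg \<psi> (i, j))"
    using xyz(2) by (auto simp: seg rel_interior_closed_segment open_segment_def)
  then have "black_pos \<psi> (i, j) = y"
    unfolding black_pos_def using xyz(3) by (intro the1_equality[OF black_pos_unique]) auto
  then show ?thesis using that xyz seg by blast
qed

lemma black_pos_in_range: "black_pos \<psi> b \<in> range \<psi>"
proof (cases b)
  case (Pair i j)
  obtain x z where "{x, black_pos \<psi> (i, j), z} = {\<psi> (i + 1, j), \<psi> (i, j + 1), \<psi> (i + 1, j + 1)}"
    by (rule black_segment)
  then show ?thesis unfolding Pair by (metis insertCI insertE rangeI empty_iff)
qed

lemma black_pos_in_rel_interior: "black_pos \<psi> b \<in> rel_interior (psi_seg \<psi> b)"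
proof (cases b)
  case (Pair i j)
  obtain x z where "black_pos \<psi> (i, j) \<in> open_segment x z" "psi_seg \<psi> (i, j) = closed_segment x z"
    by (rule black_segment)
  then show ?thesis by (auto simp: Pair rel_interior_closed_segment open_segment_def)
qed

lemma black_pos_notin_interior_white: "black_pos \<psi> b \<notin> interior (psi_tri \<psi> w)"
proof -
  obtain v where "black_pos \<psi> b = \<psi> v" using black_pos_in_range by blast
  then show ?thesis using vertex_notin_interior_white by simp
qed

lemma white_contains_two_black_corners:
  assumes "hex_adj w (i, j)"
  obtains p q where "p \<noteq> q" "p \<in> {\<psi> (i + 1, j), \<psi> (i, j + 1), \<psi> (i + 1, j + 1)}"
    "q \<in> {\<psi> (i + 1, j), \<psi> (i, j + 1), \<psi> (i + 1, j + 1)}" "p \<in> psi_tri \<psi> w" "q \<in> psi_tri \<psi> w"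
  using assms that black_corners_in_white[of i j] black_corners_distinct[of i j]
  unfolding hex_adj_black_Pair by blast

lemma black_corner_pair_in_white:
  assumes "p \<in> {\<psi> (i + 1, j), \<psi> (i, j + 1), \<psi> (i + 1, j + 1)}"
    "q \<in> {\<psi> (i + 1, j), \<psi> (i, j + 1), \<psi> (i + 1, j + 1)}"
  obtains w where "hex_adj w (i, j)" "p \<in> psi_tri \<psi> w" "q \<in> psi_tri \<psi> w"
proof -
  have "hex_adj (i, j) (i, j)" "hex_adj (i, j + 1) (i, j)" "hex_adj (i + 1, j) (i, j)"
    by (simp_all add: hex_adj_black_Pair)
  then show ?thesis using assms that black_corners_in_white[of i j] by blast
qed

lemma black_subset_adjacent_white:
  obtains w where "hex_adj w b" "psi_seg \<psi> b \<subseteq> psi_tri \<psi> w"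
proof (cases b)
  case (Pair i j)
  obtain x z where xz: "{x, black_pos \<psi> (i, j), z} = {\<psi> (i + 1, j), \<psi> (i, j + 1), \<psi> (i + 1, j + 1)}"
    "psi_seg \<psi> (i, j) = closed_segment x z"
    by (rule black_segment)
  obtain w where "hex_adj w (i, j)" "x \<in> psi_tri \<psi> w" "z \<in> psi_tri \<psi> w"
    using black_corner_pair_in_white[of x i j z] xz(1) by blast
  then show ?thesis
    using that closed_segment_subset[OF _ _ convex_white] xz(2) Pair by metis
qed

lemma black_pos_in_white:
  assumes "hex_adj w b"
  shows "black_pos \<psi> b \<in> psi_tri \<psi> w"
proof (cases b)
  case (Pair i j)
  obtain x z where xz: "{x, black_pos \<psi> (i, j), z} = {\<psi> (i + 1, j), \<psi> (i, j + 1), \<psi> (i + 1, j + 1)}"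
    "black_pos \<psi> (i, j) \<in> open_segment x z"
    by (rule black_segment)
  obtain p q where pq: "p \<noteq> q" "p \<in> {\<psi> (i + 1, j), \<psi> (i, j + 1), \<psi> (i + 1, j + 1)}"
    "q \<in> {\<psi> (i + 1, j), \<psi> (i, j + 1), \<psi> (i + 1, j + 1)}" "p \<in> psi_tri \<psi> w" "q \<in> psi_tri \<psi> w"
    by (rule white_contains_two_black_corners[of w i j, OF assms[unfolded Pair]])
  have "p \<in> {x, black_pos \<psi> (i, j), z}" "q \<in> {x, black_pos \<psi> (i, j), z}"
    using pq(2,3) unfolding xz(1) .
  show ?thesis
  proof (cases "black_pos \<psi> (i, j) \<in> {p, q}")
    case True
    then show ?thesis using pq(4,5) Pair by auto
  next
    case False
    then have "x \<in> psi_tri \<psi> w" "z \<in> psi_tri \<psi> w"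
      using pq \<open>p \<in> {x, black_pos \<psi> (i, j), z}\<close> \<open>q \<in> {x, black_pos \<psi> (i, j), z}\<close> by auto
    then have "closed_segment x z \<subseteq> psi_tri \<psi> w" by (rule closed_segment_subset[OF _ _ convex_white])
    then show ?thesis using xz(2) Pair by (auto simp: open_segment_def)
  qed
qed

lemma drawn_edge_if_hex_adj:
  assumes "hex_adj w b"
  shows "drawn_edge \<psi> w b"
proof (cases b)
  case (Pair i j)
  have "{\<psi> (i + 1, j), \<psi> (i, j + 1), \<psi> (i + 1, j + 1)} \<subseteq> psi_seg \<psi> (i, j)"
    by (simp add: psi_seg_Pair hull_subset)
  moreover obtain p q where "p \<noteq> q" "p \<in> {\<psi> (i + 1, j), \<psi> (i, j + 1), \<psi> (i + 1, j + 1)}"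
    "q \<in> {\<psi> (i + 1, j), \<psi> (i, j + 1), \<psi> (i + 1, j + 1)}" "p \<in> psi_tri \<psi> w" "q \<in> psi_tri \<psi> w"
    by (rule white_contains_two_black_corners[of w i j, OF assms[unfolded Pair]])
  ultimately show ?thesis unfolding drawn_edge_def Pair by blast
qed

text \<open>A point that a non-neighbour segment shares with \<open>\<psi>(w)\<close> lies on \<open>\<psi>(w)\<close>'s frontier,
  hence on a second segment; so it is an extreme point of one of at most four segments,
  and there are only finitely many of those.\<close>
lemma hex_adj_if_drawn_edge:
  assumes "drawn_edge \<psi> w b"
  shows "hex_adj w b"
proof (rule ccontr)
  assume not_adj: "\<not> hex_adj w b"
  obtain x y where xy: "x \<noteq> y" "x \<in> psi_seg \<psi> b \<inter> psi_tri \<psi> w" "y \<in> psi_seg \<psi> b \<inter> psi_tri \<psi> w"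
    using assms unfolding drawn_edge_def by blast
  define E where "E = (\<Union>b' \<in> insert b {b'. hex_adj w b'}. {p. p extreme_point_of psi_seg \<psi> b'})"
  have "finite E"
    unfolding E_def psi_seg_def using finite_hex_adj
    by (intro finite_UN_I finite_insert[THEN iffD2])
      (auto intro: finite_subset[OF extreme_points_of_convex_hull] simp: black_face_def)
  moreover have "closed_segment x y \<subseteq> E"
  proof
    fix p assume "p \<in> closed_segment x y"
    then have p: "p \<in> psi_seg \<psi> b" "p \<in> psi_tri \<psi> w"
      using xy closed_segment_subset[OF _ _ convex_Int[OF convex_black convex_white]] by blast+
    have "p \<notin> interior (psi_tri \<psi> w)"
    proof
      assume "p \<in> interior (psi_tri \<psi> w)"
      moreover obtain w' where "hex_adj w' b" "psi_seg \<psi> b \<subseteq> psi_tri \<psi> w'"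
        by (rule black_subset_adjacent_white)
      ultimately show False using white_eq_if_interior_Int p(1) not_adj by blast
    qed
    then obtain b' where "hex_adj w b'" "p \<in> psi_seg \<psi> b'"
      using white_frontier_subset_black p(2) by blast
    then show "p \<in> E"
      using black_Int_extreme_point[of b b' p] p(1) not_adj unfolding E_def by blast
  qed
  ultimately have "finite (closed_segment x y)" by (rule finite_subset[rotated])
  then show False using xy(1) by simp
qed

lemma white_pos_eq_iff: "white_pos \<psi> w = white_pos \<psi> w' \<longleftrightarrow> w = w'"
proof
  assume "white_pos \<psi> w = white_pos \<psi> w'"
  then have "white_pos \<psi> w \<in> psi_tri \<psi> w'"
    using white_pos_in_interior[of w'] interior_subset by auto
  then show "w = w'" by (rule white_eq_if_interior_Int[OF white_pos_in_interior])
qed simp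

lemma black_pos_eq_iff: "black_pos \<psi> b = black_pos \<psi> b' \<longleftrightarrow> b = b'"
proof
  assume eq: "black_pos \<psi> b = black_pos \<psi> b'"
  obtain v where v: "black_pos \<psi> b = \<psi> v" using black_pos_in_range by blast
  obtain b0 where "{b. \<psi> v \<in> rel_interior (psi_seg \<psi> b)} = {b0}"
    using card_rel_interior_black card_1_singletonE by blast
  then show "b = b'" using black_pos_in_rel_interior[of b] black_pos_in_rel_interior[of b'] eq v
    by (metis mem_Collect_eq singletonD)
qed simp

lemma white_pos_ne_black_pos: "white_pos \<psi> w \<noteq> black_pos \<psi> b"
  using white_pos_in_interior black_pos_notin_interior_white by metis

lemma hex_pos_inj: "inj (hex_pos \<psi>)"
proof (rule injI)
  fix u u' show "hex_pos \<psi> u = hex_pos \<psi> u' \<Longrightarrow> u = u'"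
    by (cases u; cases u') (simp_all add: hex_pos_def white_pos_eq_iff black_pos_eq_iff
        white_pos_ne_black_pos white_pos_ne_black_pos[THEN not_sym])
qed

lemma edge_subset_white:
  assumes "hex_adj w b"
  shows "closed_segment (white_pos \<psi> w) (black_pos \<psi> b) \<subseteq> psi_tri \<psi> w"
  using white_pos_in_interior[of w] interior_subset black_pos_in_white[OF assms]
  by (intro closed_segment_subset convex_white) auto

lemma edge_in_interior_white:
  assumes "hex_adj w b" "p \<in> closed_segment (white_pos \<psi> w) (black_pos \<psi> b)" "p \<noteq> black_pos \<psi> b"
  shows "p \<in> interior (psi_tri \<psi> w)"
  using closed_segment_exits_interior_at_end[OF convex_white white_pos_in_interior
      black_pos_in_white[OF assms(1)] assms(2)] assms(3) by blast

lemma hex_edges_Int: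
  assumes "hex_adj w b" "hex_adj w' b'" "(w, b) \<noteq> (w', b')"
    and p: "p \<in> closed_segment (white_pos \<psi> w) (black_pos \<psi> b)"
      "p \<in> closed_segment (white_pos \<psi> w') (black_pos \<psi> b')"
  shows "p \<in> {white_pos \<psi> w, black_pos \<psi> b} \<inter> {white_pos \<psi> w', black_pos \<psi> b'}"
proof (cases "w = w'")
  case True
  then have "black_pos \<psi> b \<noteq> black_pos \<psi> b'" using assms(3) by (simp add: black_pos_eq_iff)
  then have "p = white_pos \<psi> w"
    using closed_segments_from_interior_point_Int[OF convex_white white_pos_in_interior
        black_pos_in_white[OF assms(1)] black_pos_in_white[OF assms(2)[folded True]]
        black_pos_notin_interior_white black_pos_notin_interior_white _ p(1) p(2)[folded True]]
    by blast
  then show ?thesis using True by simp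
next
  case False
  have "p = black_pos \<psi> b"
    using edge_in_interior_white[OF assms(1) p(1)] edge_subset_white[OF assms(2)] p(2)
      white_eq_if_interior_Int False by blast
  moreover have "p = black_pos \<psi> b'"
    using edge_in_interior_white[OF assms(2) p(2)] edge_subset_white[OF assms(1)] p(1)
      white_eq_if_interior_Int False by blast
  ultimately show ?thesis by simp
qed

end

lemma T_graph_delta_apex:
  assumes "0 < pa" "pa < 1" "0 < pb" "pb < 1" "0 < pc" "pc < 1"
    and "is_T_graph_map pa pb pc \<psi>" "T_nondegenerate \<psi>"
    and "\<forall>b. \<exists>!x. x \<in> range \<psi> \<and> x \<in> rel_interior (psi_seg \<psi> b)"
  shows "T_graph (delta_apex pa pb pc) \<psi>"
proof -
  from assms(7) have T: "\<forall>b. collinear (\<psi> ` black_face b)"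
      "\<forall>w. \<exists>a c. \<psi> (fst w, snd w) = c \<and> \<psi> (fst w + 1, snd w) = a + c \<and>
         \<psi> (fst w, snd w + 1) = a * delta_apex pa pb pc + c"
      "\<forall>w w'. w \<noteq> w' \<longrightarrow> interior (psi_tri \<psi> w) \<inter> interior (psi_tri \<psi> w') = {}"
      "\<forall>b b' p. b \<noteq> b' \<longrightarrow> p \<in> psi_seg \<psi> b \<inter> psi_seg \<psi> b' \<longrightarrow>
         p extreme_point_of psi_seg \<psi> b \<or> p extreme_point_of psi_seg \<psi> b'"
    unfolding is_T_graph_map_def by simp_all
  from assms(8) have N: "\<forall>w z. psi_tri \<psi> w \<noteq> {z}"
      "\<forall>v. card {b. \<psi> v \<in> rel_interior (psi_seg \<psi> b)} = 1"
    unfolding T_nondegenerate_def by simp_all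
  show ?thesis
  proof
    show "Im (delta_apex pa pb pc) \<noteq> 0" using Im_delta_apex_pos assms(1-6) by fastforce
    show "\<exists>a c. \<psi> (i, j) = c \<and> \<psi> (i + 1, j) = a + c \<and> \<psi> (i, j + 1) = a * delta_apex pa pb pc + c"
      for i j using T(2)[rule_format, of "(i, j)"] by simp
  qed (fact T(1,3,4)[rule_format] N[rule_format] assms(9)[rule_format])+
qed

theorem mainTheorem2:
  fixes pa pb pc :: real and \<psi> :: "int \<times> int \<Rightarrow> complex"
  assumes "0 < pa" "pa < 1" "0 < pb" "pb < 1" "0 < pc" "pc < 1" "pa + pb + pc = 1"
    and "is_T_graph_map pa pb pc \<psi>"
    and "T_nondegenerate \<psi>"
    and "\<forall>b. \<exists>!x. x \<in> range \<psi> \<and> x \<in> rel_interior (psi_seg \<psi> b)"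
  shows "inj (hex_pos \<psi>)
    \<and> (\<forall>w b. drawn_edge \<psi> w b \<longleftrightarrow> hex_adj w b)
    \<and> (\<forall>w b w' b'. hex_adj w b \<longrightarrow> hex_adj w' b' \<longrightarrow> (w, b) \<noteq> (w', b') \<longrightarrow>
         closed_segment (white_pos \<psi> w) (black_pos \<psi> b) \<inter>
         closed_segment (white_pos \<psi> w') (black_pos \<psi> b')
         \<subseteq> {white_pos \<psi> w, black_pos \<psi> b} \<inter> {white_pos \<psi> w', black_pos \<psi> b'})"
proof -
  interpret T_graph "delta_apex pa pb pc" \<psi>
    by (rule T_graph_delta_apex[OF assms(1-6,8-10)])
  show ?thesis
    using hex_pos_inj drawn_edge_if_hex_adj hex_adj_if_drawn_edge hex_edges_Int by blast
qed

end
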